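(* Let $h:\omega\to\omega$ satisfy $1<h(n)<\omega$ for all $n$. Then $\mathbb{PT}_h$ is Cohen preserving.
   Context: $\mathbb{PT}_h$ is the poset of trees $p\subseteq\omega^{<\omega}$ such that: for all $t\in p$ and $l\in\mathrm{dom}(t)$, $t(l)<h(l)$; every $t\in p$ has either exactly one or exactly $h(l(t))$ immediate successors in $p$ (where $l(t)$ is the length of $t$); and every $t\in p$ has an extension $t'\in p$ with $h(l(t'))$ immediate successors in $p$. The order is inclusion. A forcing notion $\mathbb P$ is Cohen preserving if for every $p\in\mathbb P$ and every $\mathbb P$-name $\dot D$ with $p\Vdash$ "$\dot D\subseteq 2^{<\omega}$ is dense open", there are a dense set $E\subseteq 2^{<\omega}$ in the ground model and $q\le p$ with $q\Vdash \check E\subseteq\dot D$. *)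

theory Defs
  imports Main "HOL-Library.Sublist"
begin

definition succs :: "nat list set \<Rightarrow> nat list \<Rightarrow> nat set" where
  "succs p t = {i. t @ [i] \<in> p}"

(* The poset PT_h: conditions are nonempty trees (closed under initial segments);
   ordered by inclusion (q \<le> p iff q \<subseteq> p). *)
definition PT :: "(nat \<Rightarrow> nat) \<Rightarrow> nat list set set" where
  "PT h = {p. p \<noteq> {}
     \<and> (\<forall>t\<in>p. \<forall>s. prefix s t \<longrightarrow> s \<in> p)
     \<and> (\<forall>t\<in>p. \<forall>l<length t. t ! l < h l)
     \<and> (\<forall>t\<in>p. card (succs p t) = 1 \<or> card (succs p t) = h (length t))
     \<and> (\<forall>t\<in>p. \<exists>t'\<in>p. prefix t t' \<and> card (succs p t') = h (length t'))}"

(* Generic forcing notion: set of conditions P, order le (le q p = q is stronger). *)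
definition dense_below :: "'a set \<Rightarrow> ('a \<Rightarrow> 'a \<Rightarrow> bool) \<Rightarrow> 'a \<Rightarrow> 'a set \<Rightarrow> bool" where
  "dense_below P le p X = (\<forall>q\<in>P. le q p \<longrightarrow> (\<exists>r\<in>P. le r q \<and> r \<in> X))"

(* A P-name for a subset of 2^{<omega} is coded by N: N s is the set of conditions q
   such that (check s, q) belongs to the name.  forces_mem P le N q s  means
   q forces  check s \<in> name. *)
definition forces_mem ::
  "'a set \<Rightarrow> ('a \<Rightarrow> 'a \<Rightarrow> bool) \<Rightarrow> (bool list \<Rightarrow> 'a set) \<Rightarrow> 'a \<Rightarrow> bool list \<Rightarrow> bool" where
  "forces_mem P le N q s = dense_below P le q {r\<in>P. \<exists>q'\<in>P. q' \<in> N s \<and> le r q'}"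

definition forces_dense_open ::
  "'a set \<Rightarrow> ('a \<Rightarrow> 'a \<Rightarrow> bool) \<Rightarrow> (bool list \<Rightarrow> 'a set) \<Rightarrow> 'a \<Rightarrow> bool" where
  "forces_dense_open P le N p =
     ((\<forall>s. dense_below P le p {q\<in>P. \<exists>t. prefix s t \<and> forces_mem P le N q t})
      \<and> (\<forall>s t. prefix s t \<longrightarrow>
            (\<forall>q\<in>P. le q p \<longrightarrow> forces_mem P le N q s \<longrightarrow> forces_mem P le N q t)))"

definition dense_tree :: "bool list set \<Rightarrow> bool" where
  "dense_tree E = (\<forall>s. \<exists>t\<in>E. prefix s t)"

definition cohen_preserving :: "'a set \<Rightarrow> ('a \<Rightarrow> 'a \<Rightarrow> bool) \<Rightarrow> bool" where
  "cohen_preserving P le =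
     (\<forall>p\<in>P. \<forall>N. forces_dense_open P le N p \<longrightarrow>
        (\<exists>E. dense_tree E \<and> (\<exists>q\<in>P. le q p \<and> (\<forall>s\<in>E. forces_mem P le N q s))))"

end

theory Submission
  imports Defs "HOL-Library.Countable"
begin

(* A fusion argument. Enumerate 2^{<omega} as s_0, s_1, ... and build conditions
   p = q_0 >= q_1 >= ... and levels L_0 < L_1 < ... such that q_(n+1) agrees with q_n up to
   level L_n, every node of q_(n+1) at level L_(n+1) lies above a splitting node of length at
   least L_n, and q_(n+1) forces some t_n extending s_n into the name. The intersection of the
   q_n is then a condition; it forces every t_n, and the t_n form a dense set.

   To get q_(n+1), treat the finitely many nodes u of q_n at level L_n one at a time: density
   below the restriction of q_n to u extends the current t, and openness keeps the conditions
   chosen before forcing the longer t. Shrinking each chosen condition above one of its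
   splitting nodes and taking the union gives q_(n+1). *)

section \<open>Conditions of \<open>PT h\<close>\<close>

abbreviation splitting :: "(nat \<Rightarrow> nat) \<Rightarrow> nat list set \<Rightarrow> nat list \<Rightarrow> bool" where
  "splitting h p t \<equiv> card (succs p t) = h (length t)"

definition tree_restrict :: "'a list set \<Rightarrow> 'a list \<Rightarrow> 'a list set" where
  "tree_restrict p w = {v\<in>p. prefix v w \<or> prefix w v}"

definition tree_level :: "'a list set \<Rightarrow> nat \<Rightarrow> 'a list set" where
  "tree_level p L = {u\<in>p. length u = L}"

lemma prefix_comparable_same_length_eq:
  assumes "prefix u x" "prefix x v \<or> prefix v x" "length u = length v"
  shows "u = v"
proof -
  have "prefix u v"
    using assms prefix_order.trans[OF assms(1)] prefix_length_prefix[of u x v] by auto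
  then show ?thesis using assms(3) prefix_length_prefix[of v v u] prefix_order.antisym by auto
qed

lemma PT_I:
  assumes "p \<noteq> {}" "\<forall>t\<in>p. \<forall>s. prefix s t \<longrightarrow> s \<in> p" "\<forall>t\<in>p. \<forall>l<length t. t ! l < h l"
    "\<forall>t\<in>p. card (succs p t) = 1 \<or> splitting h p t"
    "\<forall>t\<in>p. \<exists>t'\<in>p. prefix t t' \<and> splitting h p t'"
  shows "p \<in> PT h"
  using assms unfolding PT_def by simp

lemma PT_prefix_closed: "p \<in> PT h \<Longrightarrow> t \<in> p \<Longrightarrow> prefix s t \<Longrightarrow> s \<in> p"
  unfolding PT_def by blast

lemma PT_Nil: "p \<in> PT h \<Longrightarrow> [] \<in> p"
  unfolding PT_def by auto

lemma PT_nth_less: "p \<in> PT h \<Longrightarrow> t \<in> p \<Longrightarrow> l < length t \<Longrightarrow> t ! l < h l"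
  unfolding PT_def by simp

lemma PT_card_succs: "p \<in> PT h \<Longrightarrow> t \<in> p \<Longrightarrow> card (succs p t) = 1 \<or> splitting h p t"
  unfolding PT_def by simp

lemma PT_splitting_extension: "p \<in> PT h \<Longrightarrow> t \<in> p \<Longrightarrow> \<exists>t'\<in>p. prefix t t' \<and> splitting h p t'"
  unfolding PT_def by simp

lemma PT_succs_nonempty:
  assumes "0 < h (length t)" "p \<in> PT h" "t \<in> p"
  shows "\<exists>i. t @ [i] \<in> p"
proof -
  have "card (succs p t) \<noteq> 0" using PT_card_succs[OF assms(2,3)] assms(1) by auto
  then have "succs p t \<noteq> {}" by force
  then show ?thesis unfolding succs_def by blast
qed

lemma PT_extend_to_length:
  assumes h_pos: "\<forall>n. 0 < h n" and p: "p \<in> PT h"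
  shows "t \<in> p \<Longrightarrow> length t \<le> m \<Longrightarrow> \<exists>v\<in>p. prefix t v \<and> length v = m"
proof (induction m)
  case (Suc m)
  show ?case
  proof (cases "length t = Suc m")
    case False
    then obtain v where v: "v \<in> p" "prefix t v" "length v = m" using Suc by auto
    then obtain i where "v @ [i] \<in> p" using PT_succs_nonempty h_pos p by blast
    then show ?thesis using v by (metis length_append_singleton prefix_order.trans prefix_snoc)
  qed (use Suc in auto)
qed simp

lemma PT_level_nonempty: "\<forall>n. 0 < h n \<Longrightarrow> p \<in> PT h \<Longrightarrow> tree_level p L \<noteq> {}"
  using PT_extend_to_length[of h p "[]" L] PT_Nil unfolding tree_level_def by fastforce

lemma finite_tree_level_PT:
  assumes p: "p \<in> PT h"
  shows "finite (tree_level p L)"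
proof (rule finite_subset)
  let ?A = "\<Union>l<L. {..<h l}"
  show "tree_level p L \<subseteq> {xs. set xs \<subseteq> ?A \<and> length xs = L}"
    using PT_nth_less[OF p] by (fastforce simp: tree_level_def in_set_conv_nth)
  show "finite {xs. set xs \<subseteq> ?A \<and> length xs = L}"
    by (rule finite_lists_length_eq) auto
qed

lemma tree_restrict_subset: "tree_restrict p w \<subseteq> p"
  unfolding tree_restrict_def by auto

lemma succs_tree_restrict_above: "prefix w t \<Longrightarrow> succs (tree_restrict p w) t = succs p t"
  unfolding succs_def tree_restrict_def by auto

lemma succs_tree_restrict_below:
  assumes "p \<in> PT h" "w \<in> p" "strict_prefix t w"
  shows "succs (tree_restrict p w) t = {w ! length t}"
proof -
  obtain x xs where w: "w = t @ x # xs" using assms(3) by (rule strict_prefixE')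
  have "t @ [x] \<in> p" using PT_prefix_closed[OF assms(1,2)] w by simp
  then show ?thesis using w by (auto simp: succs_def tree_restrict_def)
qed

lemma card_succs_tree_restrict:
  assumes p: "p \<in> PT h" and w: "w \<in> p" and t: "t \<in> tree_restrict p w"
  shows "card (succs (tree_restrict p w) t) = 1 \<or> splitting h (tree_restrict p w) t"
proof (cases "prefix w t")
  case True
  have "t \<in> p" using t tree_restrict_subset by blast
  then show ?thesis using PT_card_succs[OF p] succs_tree_restrict_above[OF True] by simp
next
  case False
  then have "strict_prefix t w" using t unfolding tree_restrict_def by auto
  then show ?thesis using succs_tree_restrict_below[OF p w] by simp
qed

lemma tree_restrict_PT:
  assumes p: "p \<in> PT h" and w: "w \<in> p"
  shows "tree_restrict p w \<in> PT h"
proof (rule PT_I)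
  let ?S = "tree_restrict p w"
  show "?S \<noteq> {}" using w unfolding tree_restrict_def by auto
  show "\<forall>t\<in>?S. \<forall>s. prefix s t \<longrightarrow> s \<in> ?S"
  proof (intro ballI allI impI)
    fix t s assume t: "t \<in> ?S" and "prefix s t"
    then have "s \<in> p" "prefix s w \<or> prefix w s"
      using PT_prefix_closed[OF p] prefix_same_cases[of s t w] prefix_order.trans[of s t w]
      unfolding tree_restrict_def by auto
    then show "s \<in> ?S" unfolding tree_restrict_def by simp
  qed
  show "\<forall>t\<in>?S. \<forall>l<length t. t ! l < h l"
    using PT_nth_less[OF p] unfolding tree_restrict_def by simp
  show "\<forall>t\<in>?S. card (succs ?S t) = 1 \<or> splitting h ?S t"
    using card_succs_tree_restrict[OF p w] by blast
  show "\<forall>t\<in>?S. \<exists>t'\<in>?S. prefix t t' \<and> splitting h ?S t'"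
  proof
    fix t assume t: "t \<in> ?S"
    define t0 where "t0 = (if prefix w t then t else w)"
    have t0: "t0 \<in> p" "prefix t t0" "prefix w t0"
      using t w unfolding t0_def tree_restrict_def by auto
    obtain t' where t': "t' \<in> p" "prefix t0 t'" "splitting h p t'"
      using PT_splitting_extension[OF p t0(1)] by blast
    have "prefix t t'" "prefix w t'" using t0 t'(2) prefix_order.trans by blast+
    moreover have "t' \<in> ?S" using t'(1) \<open>prefix w t'\<close> unfolding tree_restrict_def by simp
    ultimately show "\<exists>t'\<in>?S. prefix t t' \<and> splitting h ?S t'"
      using t'(3) succs_tree_restrict_above[of w t' p] by auto
  qed
qed

lemma mem_if_PT_subset_tree_restrict:
  assumes "\<forall>n. 0 < h n" "r \<in> PT h" "r \<subseteq> tree_restrict q u"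
  shows "u \<in> r"
proof -
  obtain v where v: "v \<in> r" "length v = length u"
    using PT_extend_to_length[OF assms(1,2) PT_Nil[OF assms(2)], of "length u"] by auto
  then have "prefix v u \<or> prefix u v" using assms(3) unfolding tree_restrict_def by auto
  then show ?thesis using v prefix_comparable_same_length_eq[of v v u] by auto
qed

section \<open>Forcing over a preorder\<close>

lemma forces_mem_mono:
  assumes "transp le" "forces_mem P le N q t" "le q' q"
  shows "forces_mem P le N q' t"
  using assms unfolding forces_mem_def dense_below_def by (meson transpE)

lemma forces_memI_dense:
  assumes "transp le"
    and "\<And>x. x \<in> P \<Longrightarrow> le x q \<Longrightarrow> \<exists>x'\<in>P. le x' x \<and> (\<exists>c. le x' c \<and> forces_mem P le N c t)"
  shows "forces_mem P le N q t"
  unfolding forces_mem_def dense_below_def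
proof (intro ballI impI)
  fix x assume "x \<in> P" "le x q"
  then obtain x' c where x': "x' \<in> P" "le x' x" "le x' c" "forces_mem P le N c t"
    using assms(2) by blast
  then obtain y where "y \<in> P" "le y x'" "y \<in> {r\<in>P. \<exists>q'\<in>P. q' \<in> N t \<and> le r q'}"
    unfolding forces_mem_def dense_below_def by blast
  then show "\<exists>y\<in>P. le y x \<and> y \<in> {r\<in>P. \<exists>q'\<in>P. q' \<in> N t \<and> le r q'}"
    using x'(2) assms(1) by (meson transpE)
qed

lemma forces_dense_open_finite_common_extension:
  assumes D: "forces_dense_open P le N p" and trans: "transp le" and "finite V"
    and "\<forall>u\<in>V. c u \<in> P \<and> le (c u) p"
  shows "\<exists>t r. prefix s t \<and> (\<forall>u\<in>V. r u \<in> P \<and> le (r u) (c u) \<and> forces_mem P le N (r u) t)"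
  using assms(3,4)
proof (induction V rule: finite_induct)
  case (insert u V)
  then obtain t r where t: "prefix s t"
    and r: "\<forall>v\<in>V. r v \<in> P \<and> le (r v) (c v) \<and> forces_mem P le N (r v) t" by auto
  obtain r' t' where r': "r' \<in> P" "le r' (c u)" "prefix t t'" "forces_mem P le N r' t'"
    using D insert.prems unfolding forces_dense_open_def dense_below_def by blast
  have "forces_mem P le N (r v) t'" if "v \<in> V" for v
    using D r' r insert.prems that trans unfolding forces_dense_open_def by (meson transpE insertCI)
  then have "\<forall>v\<in>insert u V. (r(u := r')) v \<in> P \<and> le ((r(u := r')) v) (c v)
      \<and> forces_mem P le N ((r(u := r')) v) t'"
    using r r' by auto
  then show ?case using t r'(3) prefix_order.trans by blast
qed (use prefix_order.refl in blast)

section \<open>Amalgamation over a level\<close>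

locale amalgamation =
  fixes h :: "nat \<Rightarrow> nat" and q :: "nat list set" and L :: nat
    and r :: "nat list \<Rightarrow> nat list set"
  assumes h_pos: "\<forall>n. 0 < h n" and q: "q \<in> PT h"
    and r_PT: "\<And>u. u \<in> tree_level q L \<Longrightarrow> r u \<in> PT h"
    and r_subset: "\<And>u. u \<in> tree_level q L \<Longrightarrow> r u \<subseteq> tree_restrict q u"
begin

definition amalgam :: "nat list set" where
  "amalgam = (\<Union>u\<in>tree_level q L. r u)"

lemma self_mem_r: "u \<in> tree_level q L \<Longrightarrow> u \<in> r u"
  using mem_if_PT_subset_tree_restrict[OF h_pos r_PT r_subset] .

lemma prefix_of_mem_r:
  assumes "u \<in> tree_level q L" "t \<in> r u" "L \<le> length t"
  shows "prefix u t"
proof -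
  have "prefix t u \<or> prefix u t" "length u = L"
    using assms(1,2) r_subset[OF assms(1)] unfolding tree_restrict_def tree_level_def by auto
  then show ?thesis using assms(3) prefix_length_prefix[of u u t] by auto
qed

lemma mem_r_unique:
  assumes "u \<in> tree_level q L" "u' \<in> tree_level q L" "t \<in> r u'" "prefix u t"
  shows "u' = u"
proof -
  have "prefix t u' \<or> prefix u' t" using assms(3) r_subset[OF assms(2)]
    unfolding tree_restrict_def by auto
  then show ?thesis using assms(1,2,4) prefix_comparable_same_length_eq[of u t u']
    unfolding tree_level_def by simp
qed

lemma amalgam_subset: "amalgam \<subseteq> q"
  using r_subset tree_restrict_subset unfolding amalgam_def by blast

lemma mem_amalgam_low: "length v \<le> L \<Longrightarrow> v \<in> amalgam \<longleftrightarrow> v \<in> q"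
proof
  assume "length v \<le> L" "v \<in> q"
  then obtain u where u: "u \<in> q" "prefix v u" "length u = L"
    using PT_extend_to_length[OF h_pos q] by blast
  then have "u \<in> tree_level q L" unfolding tree_level_def by simp
  moreover from this have "v \<in> r u" using PT_prefix_closed[OF r_PT self_mem_r] u(2) by blast
  ultimately show "v \<in> amalgam" unfolding amalgam_def by blast
qed (use amalgam_subset in auto)

lemma succs_amalgam_low: "length t < L \<Longrightarrow> succs amalgam t = succs q t"
  using mem_amalgam_low[of "t @ [_]"] unfolding succs_def by auto

lemma succs_amalgam_high:
  assumes u: "u \<in> tree_level q L" and t: "t \<in> r u" "L \<le> length t"
  shows "succs amalgam t = succs (r u) t"
proof -
  have "t @ [i] \<in> r u" if "t @ [i] \<in> r u'" "u' \<in> tree_level q L" for i u'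
  proof -
    have "prefix u (t @ [i])" using prefix_of_mem_r[OF u t] by auto
    then show ?thesis using mem_r_unique[OF u] that by blast
  qed
  then show ?thesis using u unfolding succs_def amalgam_def by blast
qed

lemma amalgam_PT: "amalgam \<in> PT h"
proof (rule PT_I)
  have "[] \<in> amalgam" using mem_amalgam_low[of "[]"] PT_Nil[OF q] by simp
  then show "amalgam \<noteq> {}" by blast
  show "\<forall>t\<in>amalgam. \<forall>s. prefix s t \<longrightarrow> s \<in> amalgam"
    using PT_prefix_closed[OF r_PT] unfolding amalgam_def by blast
  show "\<forall>t\<in>amalgam. \<forall>l<length t. t ! l < h l"
    using amalgam_subset PT_nth_less[OF q] by blast
  show "\<forall>t\<in>amalgam. card (succs amalgam t) = 1 \<or> splitting h amalgam t"
  proof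
    fix t assume t: "t \<in> amalgam"
    show "card (succs amalgam t) = 1 \<or> splitting h amalgam t"
    proof (cases "length t < L")
      case True
      then show ?thesis using succs_amalgam_low PT_card_succs[OF q] t amalgam_subset by auto
    next
      case False
      then obtain u where "u \<in> tree_level q L" "t \<in> r u" using t unfolding amalgam_def by blast
      then show ?thesis using False succs_amalgam_high PT_card_succs[OF r_PT] by simp
    qed
  qed
  show "\<forall>t\<in>amalgam. \<exists>t'\<in>amalgam. prefix t t' \<and> splitting h amalgam t'"
  proof
    fix t assume "t \<in> amalgam"
    then obtain u where u: "u \<in> tree_level q L" and t: "t \<in> r u" unfolding amalgam_def by blast
    have ru: "r u \<in> PT h" using r_PT[OF u] .
    obtain v where v: "v \<in> r u" "prefix t v" "length v = max (length t) L"
      using PT_extend_to_length[OF h_pos ru t, of "max (length t) L"] by auto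
    obtain t' where t': "t' \<in> r u" "prefix v t'" "splitting h (r u) t'"
      using PT_splitting_extension[OF ru v(1)] by blast
    have "L \<le> length t'" using prefix_length_le[OF t'(2)] v(3) by simp
    then have "splitting h amalgam t'" using succs_amalgam_high[OF u t'(1)] t'(3) by simp
    moreover have "t' \<in> amalgam" using u t'(1) unfolding amalgam_def by blast
    ultimately show "\<exists>t'\<in>amalgam. prefix t t' \<and> splitting h amalgam t'"
      using v(2) t'(2) prefix_order.trans by blast
  qed
qed

text \<open>Every extension of the amalgam passes through some node \<open>y\<close> of level \<open>L\<close>, and its
  restriction to \<open>y\<close> lies below \<open>r y\<close>.\<close>

lemma amalgam_forces:
  assumes "\<And>u. u \<in> tree_level q L \<Longrightarrow> forces_mem (PT h) (\<subseteq>) N (r u) t"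
  shows "forces_mem (PT h) (\<subseteq>) N amalgam t"
proof (rule forces_memI_dense)
  fix x assume x: "x \<in> PT h" "x \<subseteq> amalgam"
  obtain y where y: "y \<in> tree_level x L" using PT_level_nonempty[OF h_pos x(1)] by blast
  then have y_level: "y \<in> tree_level q L"
    using x(2) amalgam_subset unfolding tree_level_def by blast
  have "tree_restrict x y \<subseteq> r y"
  proof
    fix z assume z: "z \<in> tree_restrict x y"
    show "z \<in> r y"
    proof (cases "prefix z y")
      case True
      then show ?thesis using PT_prefix_closed[OF r_PT self_mem_r, OF y_level y_level] by blast
    next
      case False
      then have "prefix y z" "z \<in> amalgam" using z x(2) unfolding tree_restrict_def by auto
      then show ?thesis using mem_r_unique[OF y_level] unfolding amalgam_def by blast
    qed
  qed
  moreover have "tree_restrict x y \<in> PT h" using tree_restrict_PT[OF x(1)] y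
    unfolding tree_level_def by blast
  moreover have "tree_restrict x y \<subseteq> x" by (rule tree_restrict_subset)
  ultimately show "\<exists>x'\<in>PT h. x' \<subseteq> x \<and> (\<exists>c. x' \<subseteq> c \<and> forces_mem (PT h) (\<subseteq>) N c t)"
    using assms[OF y_level] by blast
qed simp

end

section \<open>Fusion\<close>

definition fusion_step ::
  "(nat \<Rightarrow> nat) \<Rightarrow> nat \<Rightarrow> nat list set \<Rightarrow> nat \<Rightarrow> nat list set \<Rightarrow> bool" where
  "fusion_step h L q L' q' \<longleftrightarrow> q' \<in> PT h \<and> q' \<subseteq> q \<and> (\<forall>v. length v \<le> L \<longrightarrow> (v \<in> q' \<longleftrightarrow> v \<in> q))
     \<and> L < L' \<and> (\<forall>v\<in>q'. length v = L' \<longrightarrow>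
          (\<exists>w. prefix w v \<and> L \<le> length w \<and> length w < L' \<and> splitting h q' w))"

locale fusion_sequence =
  fixes h :: "nat \<Rightarrow> nat" and Q :: "nat \<Rightarrow> nat list set" and L :: "nat \<Rightarrow> nat"
  assumes h_pos: "\<forall>n. 0 < h n" and Q0: "Q 0 \<in> PT h"
    and Q_step: "\<And>n. fusion_step h (L n) (Q n) (L (Suc n)) (Q (Suc n))"
begin

lemma Q_PT: "Q n \<in> PT h"
  using Q0 Q_step unfolding fusion_step_def by (cases n) auto

lemma strict_mono_L: "strict_mono L"
  using Q_step unfolding fusion_step_def by (simp add: strict_mono_Suc_iff)

lemma Q_antimono: "m \<le> n \<Longrightarrow> Q n \<subseteq> Q m"
  using Q_step unfolding fusion_step_def by (meson lift_Suc_antimono_le)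

lemma mem_Q_iff: "m \<le> n \<Longrightarrow> length v \<le> L m \<Longrightarrow> v \<in> Q n \<longleftrightarrow> v \<in> Q m"
proof (induction n rule: dec_induct)
  case (step n)
  then show ?case
    using Q_step[of n] strict_mono_less_eq[OF strict_mono_L, of m n]
    unfolding fusion_step_def by auto
qed simp

lemma mem_fusion_iff: "length v \<le> L n \<Longrightarrow> v \<in> (\<Inter>k. Q k) \<longleftrightarrow> v \<in> Q n"
  using mem_Q_iff Q_antimono by (metis INT_iff UNIV_I nat_le_linear subsetD)

lemma succs_fusion: "length t < L n \<Longrightarrow> succs (\<Inter>k. Q k) t = succs (Q n) t"
  using mem_fusion_iff[of "t @ [_]" n] unfolding succs_def by auto

lemma fusion_PT: "(\<Inter>k. Q k) \<in> PT h"
proof (rule PT_I)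
  show "(\<Inter>k. Q k) \<noteq> {}" using mem_fusion_iff[of "[]" 0] PT_Nil[OF Q0] by auto
  show "\<forall>t\<in>\<Inter>k. Q k. \<forall>s. prefix s t \<longrightarrow> s \<in> (\<Inter>k. Q k)"
    using PT_prefix_closed[OF Q_PT] by blast
  show "\<forall>t\<in>\<Inter>k. Q k. \<forall>l<length t. t ! l < h l"
    using PT_nth_less[OF Q0] by blast
  show "\<forall>t\<in>\<Inter>k. Q k. card (succs (\<Inter>k. Q k) t) = 1 \<or> splitting h (\<Inter>k. Q k) t"
  proof
    fix t assume "t \<in> (\<Inter>k. Q k)"
    moreover have "length t < L (Suc (length t))"
      using strict_mono_imp_increasing[OF strict_mono_L, of "Suc (length t)"] by simp
    ultimately show "card (succs (\<Inter>k. Q k) t) = 1 \<or> splitting h (\<Inter>k. Q k) t"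
      using succs_fusion PT_card_succs[OF Q_PT] by auto
  qed
  show "\<forall>t\<in>\<Inter>k. Q k. \<exists>t'\<in>\<Inter>k. Q k. prefix t t' \<and> splitting h (\<Inter>k. Q k) t'"
  proof
    fix t assume t: "t \<in> (\<Inter>k. Q k)"
    define n where "n = length t"
    have "length t \<le> L n" using strict_mono_imp_increasing[OF strict_mono_L] n_def by simp
    moreover have L_less: "L n < L (Suc n)" using Q_step[of n] unfolding fusion_step_def by simp
    ultimately obtain v where v: "v \<in> Q (Suc n)" "prefix t v" "length v = L (Suc n)"
      using PT_extend_to_length[OF h_pos Q_PT, of t "Suc n" "L (Suc n)"] t by auto
    then obtain w where w: "prefix w v" "L n \<le> length w" "length w < L (Suc n)"
        "splitting h (Q (Suc n)) w"
      using Q_step[of n] unfolding fusion_step_def by blast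
    have "prefix t w" using prefix_length_prefix[OF v(2) w(1)] w(2) \<open>length t \<le> L n\<close> by simp
    moreover have "w \<in> (\<Inter>k. Q k)"
      using mem_fusion_iff[of w "Suc n"] PT_prefix_closed[OF Q_PT v(1) w(1)] w(3) by simp
    moreover have "splitting h (\<Inter>k. Q k) w" using succs_fusion[OF w(3)] w(4) by simp
    ultimately show "\<exists>t'\<in>\<Inter>k. Q k. prefix t t' \<and> splitting h (\<Inter>k. Q k) t'" by blast
  qed
qed

end

lemma forcing_splitting_conditions_on_level:
  assumes h_pos: "\<forall>n. 0 < h n" and q: "q \<in> PT h" and "q \<subseteq> p"
    and D: "forces_dense_open (PT h) (\<subseteq>) N p"
  shows "\<exists>t r w. prefix s t \<and> (\<forall>u\<in>tree_level q L. r u \<in> PT h \<and> r u \<subseteq> tree_restrict q u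
    \<and> forces_mem (PT h) (\<subseteq>) N (r u) t \<and> w u \<in> r u \<and> prefix u (w u) \<and> splitting h (r u) (w u)
    \<and> (\<forall>v\<in>r u. prefix v (w u) \<or> prefix (w u) v))"
proof -
  let ?U = "tree_level q L"
  have "\<forall>u\<in>?U. tree_restrict q u \<in> PT h \<and> tree_restrict q u \<subseteq> p"
    using tree_restrict_PT[OF q] tree_restrict_subset[of q] \<open>q \<subseteq> p\<close>
    unfolding tree_level_def by auto
  then obtain t r where t: "prefix s t"
    and r: "\<forall>u\<in>?U. r u \<in> PT h \<and> r u \<subseteq> tree_restrict q u \<and> forces_mem (PT h) (\<subseteq>) N (r u) t"
    using forces_dense_open_finite_common_extension[OF D transp_on_le finite_tree_level_PT[OF q, of L],
        of "tree_restrict q" s]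
    by blast
  have "\<exists>w. w \<in> r u \<and> prefix u w \<and> splitting h (r u) w" if u: "u \<in> ?U" for u
  proof -
    have "r u \<in> PT h" "r u \<subseteq> tree_restrict q u" using r u by auto
    then show ?thesis
      using PT_splitting_extension mem_if_PT_subset_tree_restrict[OF h_pos] by blast
  qed
  then obtain w where w: "\<And>u. u \<in> ?U \<Longrightarrow> w u \<in> r u \<and> prefix u (w u) \<and> splitting h (r u) (w u)"
    by metis
  define r' where "r' u = tree_restrict (r u) (w u)" for u
  have "r' u \<in> PT h \<and> r' u \<subseteq> tree_restrict q u \<and> forces_mem (PT h) (\<subseteq>) N (r' u) t
    \<and> w u \<in> r' u \<and> prefix u (w u) \<and> splitting h (r' u) (w u)
    \<and> (\<forall>v\<in>r' u. prefix v (w u) \<or> prefix (w u) v)" if u: "u \<in> ?U" for u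
  proof -
    have ru: "r u \<in> PT h" "r u \<subseteq> tree_restrict q u" "forces_mem (PT h) (\<subseteq>) N (r u) t"
      using r u by auto
    have "r' u \<subseteq> r u" unfolding r'_def by (rule tree_restrict_subset)
    then have "r' u \<subseteq> tree_restrict q u" "forces_mem (PT h) (\<subseteq>) N (r' u) t"
      using ru(2) forces_mem_mono[OF transp_on_le ru(3)] by blast+
    moreover have "r' u \<in> PT h" using tree_restrict_PT[OF ru(1)] w[OF u] unfolding r'_def by blast
    moreover have "splitting h (r' u) (w u)"
      using succs_tree_restrict_above[of "w u" "w u" "r u"] w[OF u] unfolding r'_def by simp
    moreover have "w u \<in> r' u" "\<forall>v\<in>r' u. prefix v (w u) \<or> prefix (w u) v"
      using w[OF u] unfolding r'_def tree_restrict_def by auto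
    ultimately show ?thesis using w[OF u] by blast
  qed
  then show ?thesis using t by blast
qed

lemma fusion_step_forcing_extension:
  assumes h_pos: "\<forall>n. 0 < h n" and q: "q \<in> PT h" and "q \<subseteq> p"
    and D: "forces_dense_open (PT h) (\<subseteq>) N p"
  shows "\<exists>q' L'. fusion_step h L q L' q' \<and> (\<exists>t. prefix s t \<and> forces_mem (PT h) (\<subseteq>) N q' t)"
proof -
  let ?U = "tree_level q L"
  obtain t r w where t: "prefix s t" and conds: "\<forall>u\<in>?U. r u \<in> PT h \<and> r u \<subseteq> tree_restrict q u
    \<and> forces_mem (PT h) (\<subseteq>) N (r u) t \<and> w u \<in> r u \<and> prefix u (w u) \<and> splitting h (r u) (w u)
    \<and> (\<forall>v\<in>r u. prefix v (w u) \<or> prefix (w u) v)"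
    using forcing_splitting_conditions_on_level[OF assms] by blast
  interpret amalgamation h q L r using h_pos q conds by unfold_locales auto
  define L' where "L' = Suc (Max ((\<lambda>u. length (w u)) ` ?U))"
  have w_length: "L \<le> length (w u) \<and> length (w u) < L'" if u: "u \<in> ?U" for u
  proof -
    have "length (w u) \<le> Max ((\<lambda>u. length (w u)) ` ?U)"
      using finite_tree_level_PT[OF q] u by simp
    moreover have "length u = L" using u unfolding tree_level_def by simp
    ultimately show ?thesis using prefix_length_le[of u "w u"] conds u unfolding L'_def by simp
  qed
  have "L < L'" using w_length PT_level_nonempty[OF h_pos q] by fastforce
  moreover have "\<exists>w. prefix w v \<and> L \<le> length w \<and> length w < L' \<and> splitting h amalgam w"
    if v: "v \<in> amalgam" "length v = L'" for v
  proof -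
    obtain u where u: "u \<in> ?U" "v \<in> r u" using v unfolding amalgam_def by blast
    then have "prefix (w u) v"
      using conds w_length[OF u(1)] v(2) prefix_length_le[of v "w u"] by fastforce
    moreover have "splitting h amalgam (w u)"
      using succs_amalgam_high[OF u(1)] w_length[OF u(1)] conds u(1) by simp
    ultimately show ?thesis using w_length[OF u(1)] by blast
  qed
  moreover have "forces_mem (PT h) (\<subseteq>) N amalgam t" using amalgam_forces conds by blast
  ultimately show ?thesis
    unfolding fusion_step_def using amalgam_PT amalgam_subset mem_amalgam_low t by blast
qed

lemma fusion_sequence_forcing_extensions:
  assumes h_pos: "\<forall>n. 0 < h n" and p: "p \<in> PT h" and D: "forces_dense_open (PT h) (\<subseteq>) N p"
  shows "\<exists>Q L. fusion_sequence h Q L \<and> Q 0 \<subseteq> p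
    \<and> (\<forall>n. \<exists>t. prefix (s n) t \<and> forces_mem (PT h) (\<subseteq>) N (Q (Suc n)) t)"
proof -
  let ?below_p = "\<lambda>(_::nat) (x::nat list set \<times> nat). fst x \<in> PT h \<and> fst x \<subseteq> p"
  let ?extends = "\<lambda>n q'. \<exists>t. prefix (s n) t \<and> forces_mem (PT h) (\<subseteq>) N q' t"
  let ?next = "\<lambda>n x y. fusion_step h (snd x) (fst x) (snd y) (fst y) \<and> ?extends n (fst y)"
  have start: "\<exists>x. ?below_p 0 x" using p by (intro exI[of _ "(p, 0)"]) simp
  have "\<exists>y. ?below_p (Suc n) y \<and> ?next n x y" if x: "?below_p n x" for x n
  proof -
    obtain q' L' where "fusion_step h (snd x) (fst x) L' q'" "?extends n q'"
      using fusion_step_forcing_extension[OF h_pos _ _ D] x by blast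
    then show ?thesis using x by (intro exI[of _ "(q', L')"]) (auto simp: fusion_step_def)
  qed
  then obtain f where f: "\<And>n. ?below_p n (f n) \<and> ?next n (f n) (f (Suc n))"
    using dependent_nat_choice[where P = ?below_p and Q = ?next, OF start] by metis
  have "fusion_sequence h (fst \<circ> f) (snd \<circ> f)" using h_pos f by unfold_locales auto
  then show ?thesis using f by (intro exI[of _ "fst \<circ> f"] exI[of _ "snd \<circ> f"]) auto
qed

theorem lemma3p4:
  fixes h :: "nat \<Rightarrow> nat"
  assumes "\<forall>n. 1 < h n"
  shows "cohen_preserving (PT h) (\<subseteq>)"
proof (unfold cohen_preserving_def, intro ballI allI impI)
  fix p N assume p: "p \<in> PT h" and D: "forces_dense_open (PT h) (\<subseteq>) N p"
  have h_pos: "\<forall>n. 0 < h n" using assms less_trans[OF zero_less_one] by blast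
  obtain Q L where fusion: "fusion_sequence h Q L" and "Q 0 \<subseteq> p"
    and "\<forall>n. \<exists>t. prefix (from_nat n) t \<and> forces_mem (PT h) (\<subseteq>) N (Q (Suc n)) t"
    using fusion_sequence_forcing_extensions[OF h_pos p D] by blast
  then obtain T where T: "\<And>n. prefix (from_nat n) (T n)"
      "\<And>n. forces_mem (PT h) (\<subseteq>) N (Q (Suc n)) (T n)"
    by metis
  have "dense_tree (range T)" unfolding dense_tree_def by (metis T(1) from_nat_to_nat rangeI)
  moreover have "(\<Inter>k. Q k) \<subseteq> p" using \<open>Q 0 \<subseteq> p\<close> by blast
  moreover have "\<forall>t\<in>range T. forces_mem (PT h) (\<subseteq>) N (\<Inter>k. Q k) t"
    using forces_mem_mono[OF transp_on_le T(2)] by blast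
  ultimately show "\<exists>E. dense_tree E \<and> (\<exists>q\<in>PT h. q \<subseteq> p \<and> (\<forall>s\<in>E. forces_mem (PT h) (\<subseteq>) N q s))"
    using fusion_sequence.fusion_PT[OF fusion] by blast
qed

end
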